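(* For $\theta\in[0,\pi/2]$ let $a_1=\frac{1}{\sqrt3}\cos\theta$, $a_2=\frac{1}{\sqrt3}\sin\theta$, $a_3=\sqrt{2/3}$, and define the torus $y_\theta:[0,2\pi]^2\to S^5$, \[y_\theta(s,\hat s)=\big(a_1\cos(s+\hat s),a_1\sin(s+\hat s),a_2\cos(s-\hat s),a_2\sin(s-\hat s),a_3\cos\hat s,a_3\sin\hat s\big).\] Then, with $\rho=\sqrt{2+\sin^2 2\theta}\in[\sqrt2,\sqrt3]$, \[W(y_\theta)=6\pi^2\Big(\frac{2}{\rho}-\frac{3}{\rho^3}\Big),\] which is increasing in $\rho$ on $[\sqrt2,\sqrt3]$. The torus $y_{\pi/4}$ is (up to an isometry of $S^5$) the Ejiri torus, with $W(y_{\pi/4})=2\pi^2\sqrt3$, and it attains the maximum of $W$ in this family; consequently the Ejiri torus is unstable as a Willmore surface in $S^5$.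
   Context: For a closed immersed surface $x:M\to S^N$ with mean curvature vector $\vec H$ and Gauss curvature $K$, the Willmore functional is $W(x)=\int_M(|\vec H|^2-K+1)\,dM$. The Ejiri torus is $E:(s,\hat s)\mapsto\frac{1}{\sqrt3}\big(\cos\hat s\cos\sqrt3 s,\ \sin\hat s\cos\sqrt3 s,\ \cos\hat s\sin\sqrt3 s,\ \sin\hat s\sin\sqrt3 s,\ \sqrt2\cos\hat s,\ \sqrt2\sin\hat s\big)\in S^5$; it is a Willmore surface. *)

theory Defs
  imports "HOL-Analysis.Analysis"
begin

type_synonym surf6 = "real \<Rightarrow> real \<Rightarrow> real^6"

definition d1 :: "surf6 \<Rightarrow> surf6" where
  "d1 x = (\<lambda>s t. vector_derivative (\<lambda>u. x u t) (at s))"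

definition d2 :: "surf6 \<Rightarrow> surf6" where
  "d2 x = (\<lambda>s t. vector_derivative (\<lambda>u. x s u) (at t))"

definition p1 :: "(real \<Rightarrow> real \<Rightarrow> real) \<Rightarrow> real \<Rightarrow> real \<Rightarrow> real" where
  "p1 f = (\<lambda>s t. deriv (\<lambda>u. f u t) s)"

definition p2 :: "(real \<Rightarrow> real \<Rightarrow> real) \<Rightarrow> real \<Rightarrow> real \<Rightarrow> real" where
  "p2 f = (\<lambda>s t. deriv (\<lambda>u. f s u) t)"

definition fE :: "surf6 \<Rightarrow> real \<Rightarrow> real \<Rightarrow> real" where
  "fE x = (\<lambda>s t. d1 x s t \<bullet> d1 x s t)"
definition fF :: "surf6 \<Rightarrow> real \<Rightarrow> real \<Rightarrow> real" where
  "fF x = (\<lambda>s t. d1 x s t \<bullet> d2 x s t)"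
definition fG :: "surf6 \<Rightarrow> real \<Rightarrow> real \<Rightarrow> real" where
  "fG x = (\<lambda>s t. d2 x s t \<bullet> d2 x s t)"

text \<open>Component of v normal to the surface inside S^5 at the point x s t, i.e. orthogonal
  to the tangent vectors and to the position vector (the normal of S^5 in R^6).\<close>
definition nrm :: "surf6 \<Rightarrow> real \<Rightarrow> real \<Rightarrow> real^6 \<Rightarrow> real^6" where
  "nrm x s t v = v - closest_point (span {d1 x s t, d2 x s t, x s t}) v"

text \<open>Mean curvature vector in S^5: H = (1/2) g^{ij} B_ij, B_ij = (x_ij)^perp.\<close>
definition mean_curv :: "surf6 \<Rightarrow> real \<Rightarrow> real \<Rightarrow> real^6" where
  "mean_curv x s t =
    (let E = fE x s t; F = fF x s t; G = fG x s t;
         B11 = nrm x s t (d1 (d1 x) s t);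
         B12 = nrm x s t (d2 (d1 x) s t);
         B22 = nrm x s t (d2 (d2 x) s t)
     in (1 / (2 * (E * G - F\<^sup>2))) *\<^sub>R (G *\<^sub>R B11 - (2 * F) *\<^sub>R B12 + E *\<^sub>R B22))"

text \<open>Gauss curvature of the induced metric (intrinsic; Brioschi formula).\<close>
definition gauss_curv :: "surf6 \<Rightarrow> real \<Rightarrow> real \<Rightarrow> real" where
  "gauss_curv x s t =
    (let E = fE x s t; F = fF x s t; G = fG x s t;
         Es = p1 (fE x) s t; Et = p2 (fE x) s t;
         Fs = p1 (fF x) s t; Ft = p2 (fF x) s t;
         Gs = p1 (fG x) s t; Gt = p2 (fG x) s t;
         Ett = p2 (p2 (fE x)) s t; Fst = p2 (p1 (fF x)) s t; Gss = p1 (p1 (fG x)) s t;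
         det3 = (\<lambda>a b c d e f g h i. a*(e*i - f*h) - b*(d*i - f*g) + c*(d*h - e*g) :: real)
     in (det3 (-Ett/2 + Fst - Gss/2) (Es/2) (Fs - Et/2)
              (Ft - Gs/2) E F
              (Gt/2) F G
         - det3 0 (Et/2) (Gs/2)
              (Et/2) E F
              (Gs/2) F G) / (E * G - F\<^sup>2)\<^sup>2)"

definition willmore :: "surf6 \<Rightarrow> real \<Rightarrow> real \<Rightarrow> real" where
  "willmore x A B = integral (cbox (0, 0) (A, B))
     (\<lambda>p. ((norm (mean_curv x (fst p) (snd p)))\<^sup>2 - gauss_curv x (fst p) (snd p) + 1)
          * sqrt (fE x (fst p) (snd p) * fG x (fst p) (snd p) - (fF x (fst p) (snd p))\<^sup>2))"

definition dirder :: "'a::euclidean_space \<Rightarrow> ('a \<Rightarrow> 'b::real_normed_vector) \<Rightarrow> 'a \<Rightarrow> 'b" where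
  "dirder v f = (\<lambda>p. vector_derivative (\<lambda>h. f (p + h *\<^sub>R v)) (at 0))"

fun iter_dirder :: "'a::euclidean_space list \<Rightarrow> ('a \<Rightarrow> 'b::real_normed_vector) \<Rightarrow> 'a \<Rightarrow> 'b" where
  "iter_dirder [] f = f"
| "iter_dirder (v # vs) f = dirder v (iter_dirder vs f)"

definition smooth_map :: "('a::euclidean_space \<Rightarrow> 'b::real_normed_vector) \<Rightarrow> bool" where
  "smooth_map f \<longleftrightarrow>
     (\<forall>vs. set vs \<subseteq> Basis \<longrightarrow>
        continuous_on UNIV (iter_dirder vs f) \<and>
        (\<forall>v\<in>Basis. \<forall>p. ((\<lambda>h. iter_dirder vs f (p + h *\<^sub>R v))
                         has_vector_derivative dirder v (iter_dirder vs f) p) (at 0)))"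

definition torus_immersion_S5 :: "surf6 \<Rightarrow> real \<Rightarrow> real \<Rightarrow> bool" where
  "torus_immersion_S5 x A B \<longleftrightarrow> A > 0 \<and> B > 0 \<and>
     smooth_map (\<lambda>p::real\<times>real. x (fst p) (snd p)) \<and>
     (\<forall>s t. norm (x s t) = 1) \<and>
     (\<forall>s t. x (s + A) t = x s t \<and> x s (t + B) = x s t) \<and>
     (\<forall>s t. fE x s t * fG x s t - (fF x s t)\<^sup>2 > 0)"

definition willmore_unstable :: "surf6 \<Rightarrow> real \<Rightarrow> real \<Rightarrow> bool" where
  "willmore_unstable x A B \<longleftrightarrow>
     (\<exists>V :: real \<Rightarrow> surf6. \<exists>\<epsilon>>0. \<exists>D c.
        V 0 = x \<and>
        smooth_map (\<lambda>q::real\<times>real\<times>real. V (fst q) (fst (snd q)) (snd (snd q))) \<and>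
        (\<forall>\<tau>\<in>{-\<epsilon><..<\<epsilon>}. torus_immersion_S5 (V \<tau>) A B) \<and>
        (\<forall>\<tau>\<in>{-\<epsilon><..<\<epsilon>}. ((\<lambda>r. willmore (V r) A B) has_real_derivative D \<tau>) (at \<tau>)) \<and>
        (D has_real_derivative c) (at 0) \<and> c < 0)"

definition ytheta :: "real \<Rightarrow> surf6" where
  "ytheta \<theta> = (\<lambda>s t.
     (let a1 = cos \<theta> / sqrt 3; a2 = sin \<theta> / sqrt 3; a3 = sqrt (2/3)
      in vector [a1 * cos (s + t), a1 * sin (s + t), a2 * cos (s - t), a2 * sin (s - t),
                 a3 * cos t, a3 * sin t]))"

definition ejiri :: surf6 where
  "ejiri = (\<lambda>s t. (1 / sqrt 3) *\<^sub>R
     vector [cos t * cos (sqrt 3 * s), sin t * cos (sqrt 3 * s), cos t * sin (sqrt 3 * s),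
             sin t * sin (sqrt 3 * s), sqrt 2 * cos t, sqrt 2 * sin t])"

end

theory Submission
  imports Defs
begin

text \<open>Every y_theta, and after a rotation of S^5 and a rescaling of s also the Ejiri torus,
  has the form a1 C1(k s + t) + a2 C2(k s - t) + a3 C3(t) with unit speed great circles C1, C2, C3
  in three mutually orthogonal planes. Its first fundamental form is constant, so K = 0, and its
  second derivatives are orthogonal to the tangent plane, so their normal parts in S^5 only lose
  the radial component. Hence |H|^2 is constant and W is the area times |H|^2 + 1, which for the
  family is 6 pi^2 (2/rho - 3/rho^3). Its derivative 6 pi^2 (9 - 2 rho^2)/rho^4 is positive on
  [sqrt 2, sqrt 3], so the maximum is at theta = pi/4, where rho = sqrt 3. Moving theta away from
  pi/4 deforms the Ejiri torus smoothly through immersed tori (the whole variation is a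
  trigonometric polynomial), and along this variation W has a strict local maximum with negative
  second derivative.\<close>

definition great_circle :: "'a::real_vector \<Rightarrow> 'a \<Rightarrow> real \<Rightarrow> 'a" where
  "great_circle u v \<phi> = cos \<phi> *\<^sub>R u + sin \<phi> *\<^sub>R v"

lemma great_circle_has_vector_derivative [derivative_intros]:
  assumes "(f has_real_derivative f') (at x)"
  shows "((\<lambda>x. great_circle u v (f x))
    has_vector_derivative f' *\<^sub>R great_circle v (- u) (f x)) (at x)"
  unfolding great_circle_def
  by (auto intro!: derivative_eq_intros assms simp: algebra_simps)

lemma great_circle_minus [simp]: "great_circle (- u) (- v) \<phi> = - great_circle u v \<phi>"
  by (simp add: great_circle_def algebra_simps)

lemma great_circle_add_2pi [simp]: "great_circle u v (\<phi> + 2 * pi) = great_circle u v \<phi>"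
  by (simp add: great_circle_def)

lemma inner_great_circle_orthogonal [simp]:
  assumes "u \<bullet> u' = 0" "u \<bullet> v' = 0" "v \<bullet> u' = 0" "v \<bullet> v' = 0"
  shows "great_circle u v x \<bullet> great_circle u' v' y = 0"
  using assms by (simp add: great_circle_def inner_add_left inner_add_right)

lemma inner_great_circle_same [simp]:
  assumes "u \<bullet> u = 1" "v \<bullet> v = 1" "u \<bullet> v = 0"
  shows "great_circle u v x \<bullet> great_circle u v y = cos (x - y)"
  using assms by (simp add: great_circle_def inner_add_left inner_add_right inner_commute cos_diff)

lemma inner_great_circle_rotated [simp]:
  assumes "u \<bullet> u = 1" "v \<bullet> v = 1" "u \<bullet> v = 0"
  shows "great_circle u v x \<bullet> great_circle v (- u) y = sin (x - y)"
    and "great_circle v (- u) x \<bullet> great_circle u v y = - sin (x - y)"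
  using assms by (simp_all add: great_circle_def inner_add_left inner_add_right inner_diff_right
      inner_commute sin_diff)

lemma closest_point_span_eq:
  fixes a p :: "'a::euclidean_space"
  assumes p: "p \<in> span S" and orth: "\<And>z. z \<in> S \<Longrightarrow> (a - p) \<bullet> z = 0"
  shows "closest_point (span S) a = p"
proof (rule closest_point_unique[symmetric])
  show "p \<in> span S" by (rule p)
  show "convex (span S)" "closed (span S)" by (simp_all add: subspace_imp_convex closed_span)
  show "\<forall>z\<in>span S. dist a p \<le> dist a z"
  proof
    fix z assume z: "z \<in> span S"
    have "orthogonal (a - p) (p - z)"
      using orthogonal_to_span[of "p - z" S "a - p"] orth p z
      by (simp add: span_diff orthogonal_def)
    then have "(dist a z)\<^sup>2 = (dist a p)\<^sup>2 + (norm (p - z))\<^sup>2"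
      unfolding dist_norm orthogonal_def power2_norm_eq_inner
      by (simp add: inner_diff_left inner_diff_right inner_commute algebra_simps)
    then show "dist a p \<le> dist a z"
      by (smt (verit) zero_le_dist zero_le_power2 power2_le_imp_le)
  qed
qed

lemma closest_point_span_radial:
  fixes v b1 b2 x :: "'a::euclidean_space"
  assumes "v \<bullet> b1 = 0" "v \<bullet> b2 = 0" "x \<bullet> b1 = 0" "x \<bullet> b2 = 0" "x \<bullet> x = 1"
  shows "closest_point (span {b1, b2, x}) v = (v \<bullet> x) *\<^sub>R x"
  using assms by (intro closest_point_span_eq) (auto simp: span_base span_mul inner_diff_left)

section \<open>Trigonometric polynomials are smooth\<close>

definition trigpoly :: "('a::euclidean_space \<times> real \<times> 'b::real_normed_vector) list \<Rightarrow> 'a \<Rightarrow> 'b" where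
  "trigpoly L p = sum_list (map (\<lambda>(w, b, u). cos (w \<bullet> p + b) *\<^sub>R u) L)"

text \<open>Differentiating along \<open>v\<close> turns \<open>cos (w \<bullet> p + b)\<close> into \<open>(w \<bullet> v) * cos (w \<bullet> p + b + pi/2)\<close>.\<close>
definition trigpoly_dirder ::
    "'a::euclidean_space \<Rightarrow> ('a \<times> real \<times> 'b::real_normed_vector) list \<Rightarrow> ('a \<times> real \<times> 'b) list" where
  "trigpoly_dirder v L = map (\<lambda>(w, b, u). (w, b + pi / 2, (w \<bullet> v) *\<^sub>R u)) L"

lemma trigpoly_Nil [simp]: "trigpoly [] p = 0"
  by (simp add: trigpoly_def)

lemma trigpoly_Cons [simp]: "trigpoly ((w, b, u) # L) p = cos (w \<bullet> p + b) *\<^sub>R u + trigpoly L p"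
  by (simp add: trigpoly_def)

lemma trigpoly_dirder_Cons [simp]:
  "trigpoly_dirder v ((w, b, u) # L) = (w, b + pi / 2, (w \<bullet> v) *\<^sub>R u) # trigpoly_dirder v L"
  by (simp add: trigpoly_dirder_def)

lemma has_vector_derivative_trigpoly:
  "((\<lambda>h. trigpoly L (p + h *\<^sub>R v)) has_vector_derivative trigpoly (trigpoly_dirder v L) p) (at 0)"
proof (induction L)
  case Nil
  then show ?case by (simp add: trigpoly_dirder_def)
next
  case (Cons a L)
  obtain w b u where a: "a = (w, b, u)" by (cases a) auto
  have "(\<lambda>h. cos (w \<bullet> (p + h *\<^sub>R v) + b) *\<^sub>R u) = (\<lambda>h. cos (h * (w \<bullet> v) + (w \<bullet> p + b)) *\<^sub>R u)"
    by (simp add: inner_add_right algebra_simps)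
  moreover have "((\<lambda>h. cos (h * (w \<bullet> v) + (w \<bullet> p + b)) *\<^sub>R u)
      has_vector_derivative (cos (w \<bullet> p + (b + pi / 2)) * (w \<bullet> v)) *\<^sub>R u) (at 0)"
    by (auto intro!: derivative_eq_intros simp: cos_add sin_add) (simp add: algebra_simps)
  ultimately show ?case
    unfolding a using has_vector_derivative_add[OF _ Cons.IH] by (simp add: scaleR_scaleR)
qed

lemma dirder_trigpoly: "dirder v (trigpoly L) = trigpoly (trigpoly_dirder v L)"
  unfolding dirder_def by (intro ext vector_derivative_at has_vector_derivative_trigpoly)

lemma iter_dirder_trigpoly: "iter_dirder vs (trigpoly L) = trigpoly (foldr trigpoly_dirder vs L)"
  by (induction vs) (simp_all add: dirder_trigpoly)

lemma continuous_on_trigpoly: "continuous_on UNIV (trigpoly L)"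
proof (induction L)
  case (Cons a L)
  obtain w b u where a: "a = (w, b, u)" by (cases a) auto
  have "trigpoly (a # L) = (\<lambda>p. cos (w \<bullet> p + b) *\<^sub>R u + trigpoly L p)"
    unfolding a by auto
  then show ?case by (simp only:) (intro continuous_intros Cons.IH)
qed (simp add: trigpoly_def[abs_def])

lemma smooth_map_trigpoly: "smooth_map (trigpoly L)"
  unfolding smooth_map_def iter_dirder_trigpoly dirder_trigpoly
  by (auto intro: continuous_on_trigpoly has_vector_derivative_trigpoly)

definition is_trigpoly :: "('a::euclidean_space \<Rightarrow> 'b::real_normed_vector) \<Rightarrow> bool" where
  "is_trigpoly f \<longleftrightarrow> (\<exists>L. f = trigpoly L)"

lemma is_trigpoly_smooth_map: "is_trigpoly f \<Longrightarrow> smooth_map f"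
  unfolding is_trigpoly_def using smooth_map_trigpoly by auto

lemma is_trigpoly_add: "is_trigpoly f \<Longrightarrow> is_trigpoly g \<Longrightarrow> is_trigpoly (\<lambda>p. f p + g p)"
proof -
  assume "is_trigpoly f" "is_trigpoly g"
  then obtain L M where "f = trigpoly L" "g = trigpoly M" unfolding is_trigpoly_def by auto
  then have "(\<lambda>p. f p + g p) = trigpoly (L @ M)" by (auto simp: trigpoly_def)
  then show ?thesis unfolding is_trigpoly_def by blast
qed

lemma is_trigpoly_cos: "is_trigpoly (\<lambda>p. cos (w \<bullet> p + b) *\<^sub>R u)"
  unfolding is_trigpoly_def by (rule exI[of _ "[(w, b, u)]"]) auto

lemma is_trigpoly_sin: "is_trigpoly (\<lambda>p. sin (w \<bullet> p + b) *\<^sub>R u)"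
proof -
  have "(\<lambda>p. sin (w \<bullet> p + b) *\<^sub>R u) = (\<lambda>p. cos (w \<bullet> p + (b - pi / 2)) *\<^sub>R u)"
    by (simp add: cos_diff algebra_simps)
  then show ?thesis using is_trigpoly_cos by simp
qed

lemma is_trigpoly_cos_mult_cos: "is_trigpoly (\<lambda>p. (cos (w1 \<bullet> p + b1) * cos (w2 \<bullet> p + b2)) *\<^sub>R u)"
proof -
  have "cos (w1 \<bullet> p + b1) * cos (w2 \<bullet> p + b2)
      = cos ((w1 + w2) \<bullet> p + (b1 + b2)) / 2 + cos ((w1 - w2) \<bullet> p + (b1 - b2)) / 2" for p
  proof -
    have "(w1 + w2) \<bullet> p + (b1 + b2) = (w1 \<bullet> p + b1) + (w2 \<bullet> p + b2)"
      "(w1 - w2) \<bullet> p + (b1 - b2) = (w1 \<bullet> p + b1) - (w2 \<bullet> p + b2)"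
      by (simp_all add: inner_add_left inner_diff_left)
    moreover have "cos A * cos B = cos (A + B) / 2 + cos (A - B) / 2" for A B :: real
      by (simp add: cos_add cos_diff field_simps)
    ultimately show ?thesis by (simp only:)
  qed
  then have "(\<lambda>p. (cos (w1 \<bullet> p + b1) * cos (w2 \<bullet> p + b2)) *\<^sub>R u)
      = (\<lambda>p. cos ((w1 + w2) \<bullet> p + (b1 + b2)) *\<^sub>R (u /\<^sub>R 2)
           + cos ((w1 - w2) \<bullet> p + (b1 - b2)) *\<^sub>R (u /\<^sub>R 2))"
    by (simp add: scaleR_add_left)
  then show ?thesis by (simp only:) (intro is_trigpoly_add is_trigpoly_cos)
qed

lemma is_trigpoly_great_circle: "is_trigpoly (\<lambda>p. c *\<^sub>R great_circle u v (w \<bullet> p + b))"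
proof -
  have "(\<lambda>p. c *\<^sub>R great_circle u v (w \<bullet> p + b))
      = (\<lambda>p. cos (w \<bullet> p + b) *\<^sub>R (c *\<^sub>R u) + sin (w \<bullet> p + b) *\<^sub>R (c *\<^sub>R v))"
    by (simp add: great_circle_def algebra_simps)
  then show ?thesis by (simp only:) (intro is_trigpoly_add is_trigpoly_cos is_trigpoly_sin)
qed

lemma is_trigpoly_cos_scaleR_great_circle:
  "is_trigpoly (\<lambda>p. (c * cos (w1 \<bullet> p + b1)) *\<^sub>R great_circle u v (w2 \<bullet> p + b2))"
proof -
  have "(\<lambda>p. (c * cos (w1 \<bullet> p + b1)) *\<^sub>R great_circle u v (w2 \<bullet> p + b2))
      = (\<lambda>p. (cos (w1 \<bullet> p + b1) * cos (w2 \<bullet> p + b2)) *\<^sub>R (c *\<^sub>R u)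
           + (cos (w1 \<bullet> p + b1) * cos (w2 \<bullet> p + (b2 - pi / 2))) *\<^sub>R (c *\<^sub>R v))"
    by (simp add: great_circle_def cos_diff algebra_simps)
  then show ?thesis by (simp only:) (intro is_trigpoly_add is_trigpoly_cos_mult_cos)
qed

section \<open>The Willmore profile of the family\<close>

definition torus_rho :: "real \<Rightarrow> real" where
  "torus_rho \<theta> = sqrt (2 + (sin (2 * \<theta>))\<^sup>2)"

definition willmore_profile :: "real \<Rightarrow> real" where
  "willmore_profile \<rho> = 6 * pi\<^sup>2 * (2 / \<rho> - 3 / \<rho> ^ 3)"

lemma torus_rho_pos: "torus_rho \<theta> > 0"
  unfolding torus_rho_def by (simp add: add_pos_nonneg)

lemma torus_rho_bounds: "torus_rho \<theta> \<in> {sqrt 2..sqrt 3}"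
  using abs_square_le_1[of "sin (2 * \<theta>)"] unfolding torus_rho_def by simp

lemma torus_rho_pi4: "torus_rho (pi / 4) = sqrt 3"
  unfolding torus_rho_def by simp

lemma torus_rho_squared: "(torus_rho \<theta>)\<^sup>2 = 3 - (cos (2 * \<theta>))\<^sup>2"
proof -
  have "(torus_rho \<theta>)\<^sup>2 = 2 + (sin (2 * \<theta>))\<^sup>2"
    unfolding torus_rho_def by (simp add: add_nonneg_nonneg)
  then show ?thesis by (simp add: sin_squared_eq)
qed

lemma torus_rho_has_real_derivative [derivative_intros]:
  assumes "(f has_real_derivative f') (at x)"
  shows "((\<lambda>x. torus_rho (f x)) has_real_derivative
    (2 * sin (2 * f x) * cos (2 * f x) / torus_rho (f x)) * f') (at x)"
proof -
  have "0 < 2 + (sin (2 * f x))\<^sup>2" by (simp add: add_pos_nonneg)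
  then show ?thesis
    unfolding torus_rho_def
    by (auto intro!: derivative_eq_intros assms simp: field_simps power2_eq_square)
qed

definition willmore_profile_deriv :: "real \<Rightarrow> real" where
  "willmore_profile_deriv \<rho> = 6 * pi\<^sup>2 * (9 / \<rho> ^ 4 - 2 / \<rho>\<^sup>2)"

lemma willmore_profile_has_real_derivative:
  "\<rho> > 0 \<Longrightarrow> (willmore_profile has_real_derivative willmore_profile_deriv \<rho>) (at \<rho>)"
  unfolding willmore_profile_def[abs_def] willmore_profile_deriv_def
  by (auto intro!: derivative_eq_intros
      simp: field_simps power2_eq_square power3_eq_cube power4_eq_xxxx)

lemma willmore_profile_deriv_pos:
  assumes "0 < \<rho>" "\<rho> \<le> sqrt 3"
  shows "willmore_profile_deriv \<rho> > 0"
proof -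
  have "\<rho>\<^sup>2 \<le> 3"
    using assms power_mono[OF assms(2), of 2] by simp
  then have "0 < (9 - 2 * \<rho>\<^sup>2) / \<rho> ^ 4"
    using assms(1) by simp
  also have "(9 - 2 * \<rho>\<^sup>2) / \<rho> ^ 4 = 9 / \<rho> ^ 4 - 2 / \<rho>\<^sup>2"
    using assms(1) by (simp add: field_simps power2_eq_square power4_eq_xxxx)
  finally show ?thesis
    unfolding willmore_profile_deriv_def by simp
qed

lemma strict_mono_on_willmore_profile: "strict_mono_on {sqrt 2..sqrt 3} willmore_profile"
proof (rule strict_mono_onI)
  fix r s assume rs: "r \<in> {sqrt 2..sqrt 3}" "s \<in> {sqrt 2..sqrt 3}" "r < s"
  show "willmore_profile r < willmore_profile s"
  proof (rule DERIV_pos_imp_increasing[OF \<open>r < s\<close>])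
    fix x assume "r \<le> x" "x \<le> s"
    moreover have "0 < sqrt 2" by simp
    ultimately have "0 < x" "x \<le> sqrt 3" using rs by (auto simp del: real_sqrt_gt_0_iff)
    then show "\<exists>y. (willmore_profile has_real_derivative y) (at x) \<and> y > 0"
      using willmore_profile_has_real_derivative willmore_profile_deriv_pos by blast
  qed
qed

lemma family_coeff_squares:
  "(cos \<theta> / sqrt 3) * (cos \<theta> / sqrt 3) = (1 + cos (2 * \<theta>)) / 6"
  "(sin \<theta> / sqrt 3) * (sin \<theta> / sqrt 3) = (1 - cos (2 * \<theta>)) / 6"
  "sqrt (2 / 3) * sqrt (2 / 3) = (2 / 3 :: real)"
  unfolding cos_double
  by (simp_all add: power2_eq_square sin_squared_eq[unfolded power2_eq_square] field_simps)

lemma family_coeff_squares_sum: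
  "(cos \<theta> / sqrt 3) * (cos \<theta> / sqrt 3) + (sin \<theta> / sqrt 3) * (sin \<theta> / sqrt 3)
     + sqrt (2 / 3) * sqrt (2 / 3) = 1"
  unfolding family_coeff_squares by (simp add: field_simps)

section \<open>Flat tori spanned by three orthogonal planes\<close>

text \<open>|H|^2 of a flat torus in terms of k and its metric coefficients E, F (with G = 1).\<close>
definition flat_torus_mean_curv_sq :: "real \<Rightarrow> real \<Rightarrow> real \<Rightarrow> real" where
  "flat_torus_mean_curv_sq k E F
     = (k * k * E - E * E - 4 * k * k * F * F + 8 * E * F * F - 4 * F * F * F * F)
       / (4 * (E - F * F)\<^sup>2)"

locale orthonormal_planes =
  fixes u1 v1 u2 v2 u3 v3 :: "real^6"
  assumes unit: "u1\<bullet>u1 = 1" "v1\<bullet>v1 = 1" "u2\<bullet>u2 = 1" "v2\<bullet>v2 = 1" "u3\<bullet>u3 = 1" "v3\<bullet>v3 = 1"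
  and orth: "u1\<bullet>v1 = 0" "u1\<bullet>u2 = 0" "u1\<bullet>v2 = 0" "u1\<bullet>u3 = 0" "u1\<bullet>v3 = 0"
         "v1\<bullet>u2 = 0" "v1\<bullet>v2 = 0" "v1\<bullet>u3 = 0" "v1\<bullet>v3 = 0"
         "u2\<bullet>v2 = 0" "u2\<bullet>u3 = 0" "u2\<bullet>v3 = 0"
         "v2\<bullet>u3 = 0" "v2\<bullet>v3 = 0" "u3\<bullet>v3 = 0"
begin

lemmas frame_inner [simp] = unit orth orth[THEN inner_commute[THEN trans]]

definition flat_torus :: "real \<Rightarrow> real \<Rightarrow> real \<Rightarrow> real \<Rightarrow> surf6" where
  "flat_torus a1 a2 a3 k s t =
     a1 *\<^sub>R great_circle u1 v1 (k * s + t) + a2 *\<^sub>R great_circle u2 v2 (k * s - t)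
     + a3 *\<^sub>R great_circle u3 v3 t"

lemma d1_flat_torus: "d1 (flat_torus a1 a2 a3 k) = (\<lambda>s t.
    (k * a1) *\<^sub>R great_circle v1 (- u1) (k * s + t)
    + (k * a2) *\<^sub>R great_circle v2 (- u2) (k * s - t))"
  unfolding d1_def flat_torus_def
  by (intro ext vector_derivative_at) (auto intro!: derivative_eq_intros simp: mult.commute)

lemma d2_flat_torus: "d2 (flat_torus a1 a2 a3 k) = (\<lambda>s t.
    a1 *\<^sub>R great_circle v1 (- u1) (k * s + t) - a2 *\<^sub>R great_circle v2 (- u2) (k * s - t)
    + a3 *\<^sub>R great_circle v3 (- u3) t)"
  unfolding d2_def flat_torus_def
  by (intro ext vector_derivative_at) (auto intro!: derivative_eq_intros simp: mult.commute)

lemma d11_flat_torus: "d1 (d1 (flat_torus a1 a2 a3 k)) = (\<lambda>s t.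
    - (k * k * a1) *\<^sub>R great_circle u1 v1 (k * s + t)
    - (k * k * a2) *\<^sub>R great_circle u2 v2 (k * s - t))"
  unfolding d1_flat_torus
  by (subst d1_def, intro ext vector_derivative_at)
    (auto intro!: derivative_eq_intros simp: mult.commute algebra_simps)

lemma d12_flat_torus: "d2 (d1 (flat_torus a1 a2 a3 k)) = (\<lambda>s t.
    - (k * a1) *\<^sub>R great_circle u1 v1 (k * s + t) + (k * a2) *\<^sub>R great_circle u2 v2 (k * s - t))"
  unfolding d1_flat_torus d2_def
  by (intro ext vector_derivative_at)
    (auto intro!: derivative_eq_intros simp: mult.commute algebra_simps)

lemma d22_flat_torus: "d2 (d2 (flat_torus a1 a2 a3 k)) = (\<lambda>s t. - flat_torus a1 a2 a3 k s t)"
  unfolding d2_flat_torus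
  by (subst d2_def, intro ext vector_derivative_at)
    (auto intro!: derivative_eq_intros simp: flat_torus_def mult.commute algebra_simps)

lemma fundamental_form_flat_torus:
  "fE (flat_torus a1 a2 a3 k) = (\<lambda>s t. k * k * (a1 * a1 + a2 * a2))"
  "fF (flat_torus a1 a2 a3 k) = (\<lambda>s t. k * (a1 * a1 - a2 * a2))"
  "fG (flat_torus a1 a2 a3 k) = (\<lambda>s t. a1 * a1 + a2 * a2 + a3 * a3)"
  by (auto simp: fE_def fF_def fG_def d1_flat_torus d2_flat_torus inner_add_left inner_add_right
      inner_diff_left inner_diff_right algebra_simps)

lemma gauss_curv_flat_torus: "gauss_curv (flat_torus a1 a2 a3 k) s t = 0"
  unfolding gauss_curv_def fundamental_form_flat_torus p1_def p2_def by simp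

lemma gram_det_flat_torus:
  "fE (flat_torus a1 a2 a3 k) s t * fG (flat_torus a1 a2 a3 k) s t
     - (fF (flat_torus a1 a2 a3 k) s t)\<^sup>2
     = k * k * (4 * a1 * a1 * a2 * a2 + (a1 * a1 + a2 * a2) * a3 * a3)"
  unfolding fundamental_form_flat_torus by (simp add: power2_eq_square algebra_simps)

lemma flat_torus_periodic:
  assumes "k \<noteq> 0"
  shows "flat_torus a1 a2 a3 k (s + 2 * pi / k) t = flat_torus a1 a2 a3 k s t"
    and "flat_torus a1 a2 a3 k s (t + 2 * pi) = flat_torus a1 a2 a3 k s t"
proof -
  have "k * (s + 2 * pi / k) + t = (k * s + t) + 2 * pi"
    "k * (s + 2 * pi / k) - t = (k * s - t) + 2 * pi"
    using assms by (simp_all add: field_simps)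
  then show "flat_torus a1 a2 a3 k (s + 2 * pi / k) t = flat_torus a1 a2 a3 k s t"
    by (simp only: flat_torus_def great_circle_add_2pi)
  have "k * s - (t + 2 * pi) + 2 * pi = k * s - t" "k * s + (t + 2 * pi) = (k * s + t) + 2 * pi"
    by simp_all
  then show "flat_torus a1 a2 a3 k s (t + 2 * pi) = flat_torus a1 a2 a3 k s t"
    by (metis flat_torus_def great_circle_add_2pi)
qed

context
  fixes a1 a2 a3 k :: real
  assumes unit_coeffs: "a1 * a1 + a2 * a2 + a3 * a3 = 1"
begin

abbreviation X :: surf6 where "X \<equiv> flat_torus a1 a2 a3 k"

lemma inner_self_flat_torus: "X s t \<bullet> X s t = 1"
  using unit_coeffs by (simp add: flat_torus_def inner_add_left inner_add_right algebra_simps)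

lemma inner_jets_flat_torus:
  "d1 (d1 X) s t \<bullet> d1 X s t = 0" "d1 (d1 X) s t \<bullet> d2 X s t = 0"
  "d2 (d1 X) s t \<bullet> d1 X s t = 0" "d2 (d1 X) s t \<bullet> d2 X s t = 0"
  "d2 (d2 X) s t \<bullet> d1 X s t = 0" "d2 (d2 X) s t \<bullet> d2 X s t = 0"
  "X s t \<bullet> d1 X s t = 0" "X s t \<bullet> d2 X s t = 0"
  "d1 (d1 X) s t \<bullet> X s t = - (k * k * (a1 * a1 + a2 * a2))"
  "d2 (d1 X) s t \<bullet> X s t = - (k * (a1 * a1 - a2 * a2))"
  "d2 (d2 X) s t \<bullet> X s t = - 1"
  "d1 (d1 X) s t \<bullet> d1 (d1 X) s t = k * k * (k * k * (a1 * a1 + a2 * a2))"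
  "d2 (d1 X) s t \<bullet> d2 (d1 X) s t = k * k * (a1 * a1 + a2 * a2)"
  "d1 (d1 X) s t \<bullet> d2 (d1 X) s t = k * k * (k * (a1 * a1 - a2 * a2))"
  unfolding d11_flat_torus d12_flat_torus d22_flat_torus unfolding d1_flat_torus d2_flat_torus
  using inner_self_flat_torus[of s t]
  by (simp_all add: flat_torus_def inner_add_left inner_add_right inner_diff_left inner_diff_right
      algebra_simps)

lemma normal_part_flat_torus:
  "nrm X s t (d1 (d1 X) s t) = d1 (d1 X) s t + (k * k * (a1 * a1 + a2 * a2)) *\<^sub>R X s t"
  "nrm X s t (d2 (d1 X) s t) = d2 (d1 X) s t + (k * (a1 * a1 - a2 * a2)) *\<^sub>R X s t"
  "nrm X s t (d2 (d2 X) s t) = 0"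
  unfolding nrm_def
  by (subst closest_point_span_radial;
      simp add: inner_jets_flat_torus inner_self_flat_torus d22_flat_torus)+

lemma mean_curv_flat_torus:
  defines "E \<equiv> k * k * (a1 * a1 + a2 * a2)" and "F \<equiv> k * (a1 * a1 - a2 * a2)"
  shows "(norm (mean_curv X s t))\<^sup>2 = flat_torus_mean_curv_sq k E F"
proof -
  define v where "v = d1 (d1 X) s t + E *\<^sub>R X s t - (2 * F) *\<^sub>R (d2 (d1 X) s t + F *\<^sub>R X s t)"
  have H: "mean_curv X s t = (1 / (2 * (E - F\<^sup>2))) *\<^sub>R v"
    using unit_coeffs
    by (simp add: mean_curv_def Let_def fundamental_form_flat_torus normal_part_flat_torus
        v_def E_def F_def)
  have "d1 (d1 X) s t \<bullet> d1 (d1 X) s t = k * k * E" "d2 (d1 X) s t \<bullet> d2 (d1 X) s t = E"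
    "d1 (d1 X) s t \<bullet> d2 (d1 X) s t = k * k * F" "d2 (d1 X) s t \<bullet> d1 (d1 X) s t = k * k * F"
    "d1 (d1 X) s t \<bullet> X s t = - E" "X s t \<bullet> d1 (d1 X) s t = - E"
    "d2 (d1 X) s t \<bullet> X s t = - F" "X s t \<bullet> d2 (d1 X) s t = - F"
    using inner_jets_flat_torus[of s t] by (simp_all add: E_def F_def inner_commute)
  then have "v \<bullet> v = k * k * E - E * E - 4 * k * k * F * F + 8 * E * F * F - 4 * F * F * F * F"
    unfolding v_def using inner_self_flat_torus[of s t]
    by (simp add: inner_add_left inner_add_right inner_diff_left inner_diff_right algebra_simps)
  then show ?thesis
    unfolding H power2_norm_eq_inner flat_torus_mean_curv_sq_def
    by (simp add: power2_eq_square algebra_simps)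
qed

lemma willmore_flat_torus:
  assumes "0 \<le> A" "0 \<le> B"
  defines "E \<equiv> k * k * (a1 * a1 + a2 * a2)" and "F \<equiv> k * (a1 * a1 - a2 * a2)"
  shows "willmore X A B = A * B * ((flat_torus_mean_curv_sq k E F + 1) * sqrt (E - F * F))"
proof -
  have "willmore X A B
      = integral (cbox (0, 0) (A, B)) (\<lambda>p. (flat_torus_mean_curv_sq k E F + 1) * sqrt (E - F * F))"
    unfolding willmore_def mean_curv_flat_torus gauss_curv_flat_torus fundamental_form_flat_torus
      unit_coeffs
    by (simp add: E_def F_def power2_eq_square)
  also have "\<dots> = A * B * ((flat_torus_mean_curv_sq k E F + 1) * sqrt (E - F * F))"
    using assms by (simp only: integral_const content_Pair) (simp add: cbox_interval)
  finally show ?thesis .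
qed

end

lemma willmore_family:
  assumes k: "k > 0"
  shows "willmore (flat_torus (cos \<theta> / sqrt 3) (sin \<theta> / sqrt 3) (sqrt (2 / 3)) k)
      (2 * pi / k) (2 * pi)
    = willmore_profile (torus_rho \<theta>)"
proof -
  define c where "c = cos (2 * \<theta>)"
  define \<rho> where "\<rho> = torus_rho \<theta>"
  have cc: "c * (c * x) = (3 - \<rho> * \<rho>) * x" for x
    using torus_rho_squared[of \<theta>] unfolding c_def \<rho>_def by (simp add: power2_eq_square)
  define E where "E = k * k / 3"
  define F where "F = k * c / 3"
  have EF: "k * k * ((cos \<theta> / sqrt 3) * (cos \<theta> / sqrt 3) + (sin \<theta> / sqrt 3) * (sin \<theta> / sqrt 3)) = E"
    "k * ((cos \<theta> / sqrt 3) * (cos \<theta> / sqrt 3) - (sin \<theta> / sqrt 3) * (sin \<theta> / sqrt 3)) = F"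
    unfolding family_coeff_squares E_def F_def c_def by (simp_all add: field_simps)
  have gram: "E - F * F = (k * \<rho> / 3)\<^sup>2"
    unfolding E_def F_def by (simp add: power2_eq_square field_simps) (simp add: cc algebra_simps)
  have sqrt_gram: "sqrt (E - F * F) = k * \<rho> / 3"
    unfolding gram using k torus_rho_pos[of \<theta>] by (simp add: \<rho>_def)
  have num: "k * k * E - E * E - 4 * k * k * F * F + 8 * E * F * F - 4 * F * F * F * F
      = k * k * k * k * (- 54 + 36 * \<rho> * \<rho> - 4 * \<rho> * \<rho> * \<rho> * \<rho>) / 81"
    unfolding E_def F_def by (simp add: field_simps) (simp add: cc algebra_simps)
  have "willmore (flat_torus (cos \<theta> / sqrt 3) (sin \<theta> / sqrt 3) (sqrt (2 / 3)) k)
        (2 * pi / k) (2 * pi)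
      = (2 * pi / k) * (2 * pi) * ((flat_torus_mean_curv_sq k E F + 1) * sqrt (E - F * F))"
    using willmore_flat_torus[OF family_coeff_squares_sum[of \<theta>], where k=k and A="2 * pi / k"
        and B="2 * pi"] k
    unfolding EF by simp
  also have "\<dots> = willmore_profile \<rho>"
    using k torus_rho_pos[of \<theta>] unfolding flat_torus_mean_curv_sq_def num sqrt_gram
    unfolding gram willmore_profile_def \<rho>_def[symmetric]
    by (simp add: field_simps power2_eq_square power3_eq_cube)
  finally show ?thesis unfolding \<rho>_def .
qed

lemma smooth_map_flat_torus: "smooth_map (\<lambda>p. flat_torus a1 a2 a3 k (fst p) (snd p))"
proof -
  have "(\<lambda>p. flat_torus a1 a2 a3 k (fst p) (snd p)) = (\<lambda>p.
      a1 *\<^sub>R great_circle u1 v1 ((k, 1) \<bullet> p + 0) + a2 *\<^sub>R great_circle u2 v2 ((k, -1) \<bullet> p + 0)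
      + a3 *\<^sub>R great_circle u3 v3 ((0, 1) \<bullet> p + 0))"
    by (auto simp: flat_torus_def inner_Pair algebra_simps)
  then show ?thesis
    by (simp only:) (intro is_trigpoly_smooth_map is_trigpoly_add is_trigpoly_great_circle)
qed

lemma smooth_map_flat_torus_rotating_coeffs:
  "smooth_map (\<lambda>q. flat_torus (c * cos (fst q + b)) (c * sin (fst q + b)) a3 k
     (fst (snd q)) (snd (snd q)))"
proof -
  have "(\<lambda>q. flat_torus (c * cos (fst q + b)) (c * sin (fst q + b)) a3 k (fst (snd q)) (snd (snd q)))
    = (\<lambda>q.
      (c * cos ((1, 0, 0) \<bullet> q + b)) *\<^sub>R great_circle u1 v1 ((0, k, 1) \<bullet> q + 0)
      + (c * cos ((1, 0, 0) \<bullet> q + (b - pi / 2))) *\<^sub>R great_circle u2 v2 ((0, k, -1) \<bullet> q + 0)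
      + a3 *\<^sub>R great_circle u3 v3 ((0, 0, 1) \<bullet> q + 0))"
    by (auto simp: flat_torus_def inner_Pair cos_diff algebra_simps)
  then show ?thesis
    by (simp only:) (intro is_trigpoly_smooth_map is_trigpoly_add is_trigpoly_great_circle
        is_trigpoly_cos_scaleR_great_circle)
qed

lemma torus_immersion_flat_torus:
  assumes "a1 * a1 + a2 * a2 + a3 * a3 = 1" "k > 0" "a3 \<noteq> 0" "a1 * a1 + a2 * a2 > 0"
  shows "torus_immersion_S5 (flat_torus a1 a2 a3 k) (2 * pi / k) (2 * pi)"
  unfolding torus_immersion_S5_def
proof (intro conjI allI)
  fix s t
  show "norm (flat_torus a1 a2 a3 k s t) = 1"
    using inner_self_flat_torus[OF assms(1)] by (simp add: norm_eq_sqrt_inner)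
  show "flat_torus a1 a2 a3 k (s + 2 * pi / k) t = flat_torus a1 a2 a3 k s t"
    "flat_torus a1 a2 a3 k s (t + 2 * pi) = flat_torus a1 a2 a3 k s t"
    using assms(2) by (simp_all add: flat_torus_periodic)
  have "0 \<le> 4 * a1 * a1 * a2 * a2"
    using zero_le_square[of "a1 * a2"] by (simp add: algebra_simps)
  moreover have "0 < (a1 * a1 + a2 * a2) * (a3 * a3)"
    using assms(3,4) by (auto simp: zero_less_mult_iff)
  ultimately have "0 < k * k * (4 * a1 * a1 * a2 * a2 + (a1 * a1 + a2 * a2) * a3 * a3)"
    using assms(2) by (simp add: mult.assoc)
  then show "fE (flat_torus a1 a2 a3 k) s t * fG (flat_torus a1 a2 a3 k) s t
      - (fF (flat_torus a1 a2 a3 k) s t)\<^sup>2 > 0"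
    unfolding gram_det_flat_torus .
qed (use assms(2) smooth_map_flat_torus in auto)

end

section \<open>The family \<open>y\<^sub>\<theta>\<close> and the Ejiri torus\<close>

lemma exhaust_6:
  fixes x :: 6
  shows "x = 1 \<or> x = 2 \<or> x = 3 \<or> x = 4 \<or> x = 5 \<or> x = 6"
proof (induct x)
  case (of_int z)
  then have "z = 0 \<or> z = 1 \<or> z = 2 \<or> z = 3 \<or> z = 4 \<or> z = 5" by simp presburger
  then show ?case by auto
qed

lemma forall_6: "(\<forall>i::6. P i) \<longleftrightarrow> P 1 \<and> P 2 \<and> P 3 \<and> P 4 \<and> P 5 \<and> P 6"
  by (metis exhaust_6)

lemma UNIV_6: "(UNIV::6 set) = {1, 2, 3, 4, 5, 6}"
  using exhaust_6 by auto

lemma vector_6 [simp]: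
  "(vector [a, b, c, d, e, f] :: real^6) $ 1 = a" "(vector [a, b, c, d, e, f] :: real^6) $ 2 = b"
  "(vector [a, b, c, d, e, f] :: real^6) $ 3 = c" "(vector [a, b, c, d, e, f] :: real^6) $ 4 = d"
  "(vector [a, b, c, d, e, f] :: real^6) $ 5 = e" "(vector [a, b, c, d, e, f] :: real^6) $ 6 = f"
  unfolding vector_def by simp_all

lemma vec_eq_iff_6:
  "(x::real^6) = y \<longleftrightarrow> x$1 = y$1 \<and> x$2 = y$2 \<and> x$3 = y$3 \<and> x$4 = y$4 \<and> x$5 = y$5 \<and> x$6 = y$6"
  unfolding vec_eq_iff forall_6 ..

lemma inner_real6:
  "(x::real^6) \<bullet> y = x$1 * y$1 + x$2 * y$2 + x$3 * y$3 + x$4 * y$4 + x$5 * y$5 + x$6 * y$6"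
  unfolding inner_vec_def UNIV_6 by simp

interpretation std: orthonormal_planes "axis 1 1" "axis 2 1" "axis 3 1" "axis 4 1" "axis 5 1"
    "axis 6 1"
  by unfold_locales (simp_all add: inner_axis_axis)

lemma ytheta_eq_flat_torus:
  "ytheta \<theta> = std.flat_torus (cos \<theta> / sqrt 3) (sin \<theta> / sqrt 3) (sqrt (2 / 3)) 1"
  unfolding std.flat_torus_def great_circle_def
  by (intro ext) (simp add: vec_eq_iff_6 ytheta_def Let_def axis_def)

lemma willmore_ytheta: "willmore (ytheta \<theta>) (2 * pi) (2 * pi) = willmore_profile (torus_rho \<theta>)"
  using std.willmore_family[of 1 \<theta>] by (simp add: ytheta_eq_flat_torus)

lemma willmore_ytheta_le_pi4:
  "willmore (ytheta \<theta>) (2 * pi) (2 * pi) \<le> willmore (ytheta (pi / 4)) (2 * pi) (2 * pi)"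
  using torus_rho_bounds[of \<theta>] strict_mono_on_willmore_profile
  unfolding willmore_ytheta torus_rho_pi4 by (auto intro: strict_mono_on_leD)

lemma willmore_ytheta_pi4: "willmore (ytheta (pi / 4)) (2 * pi) (2 * pi) = 2 * pi\<^sup>2 * sqrt 3"
proof -
  have "(sqrt 3) ^ 3 = 3 * sqrt (3::real)"
    by (simp add: power3_eq_cube)
  then show ?thesis
    unfolding willmore_ytheta torus_rho_pi4 willmore_profile_def by (simp add: field_simps)
qed

text \<open>Sum and difference of the coordinates of the two rotating planes of y_(pi/4): this turns
  cos (u \<plusminus> t) and sin (u \<plusminus> t) into the products of the Ejiri torus.\<close>
definition ejiri_rotation :: "real^6 \<Rightarrow> real^6" where
  "ejiri_rotation x = vector [(x$1 + x$3) / sqrt 2, (x$2 - x$4) / sqrt 2, (x$2 + x$4) / sqrt 2,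
     (x$3 - x$1) / sqrt 2, x$5, x$6]"

lemma linear_ejiri_rotation: "linear ejiri_rotation"
proof -
  have sqrt2: "sqrt 2 * (sqrt 2 * x) = 2 * (x::real)" for x
    by (simp add: mult.assoc[symmetric])
  show ?thesis
    by (intro linearI) (simp_all add: ejiri_rotation_def vec_eq_iff_6 field_simps sqrt2)
qed

lemma orthogonal_transformation_ejiri_rotation: "orthogonal_transformation ejiri_rotation"
  unfolding orthogonal_transformation_def
  by (simp add: linear_ejiri_rotation inner_real6 ejiri_rotation_def field_simps)

lemma ejiri_eq_rotated_ytheta: "ejiri s t = ejiri_rotation (ytheta (pi / 4) (sqrt 3 * s) t)"
proof -
  have "sqrt 18 = 3 * sqrt (2::real)"
    using real_sqrt_mult[of 9 2] by simp
  then show ?thesis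
    by (simp add: vec_eq_iff_6 ejiri_def ytheta_def ejiri_rotation_def Let_def cos_add cos_diff
        sin_add sin_diff cos_45 sin_45 field_simps real_sqrt_mult[symmetric])
qed

interpretation rot: orthonormal_planes "ejiri_rotation (axis 1 1)" "ejiri_rotation (axis 2 1)"
    "ejiri_rotation (axis 3 1)" "ejiri_rotation (axis 4 1)" "ejiri_rotation (axis 5 1)"
    "ejiri_rotation (axis 6 1)"
  using orthogonal_transformation_ejiri_rotation unfolding orthogonal_transformation_def
  by unfold_locales (simp_all add: inner_axis_axis)

definition ejiri_variation :: "real \<Rightarrow> surf6" where
  "ejiri_variation \<tau> s t = ejiri_rotation (ytheta (pi / 4 + \<tau>) (sqrt 3 * s) t)"

lemma ejiri_variation_eq_flat_torus:
  "ejiri_variation \<tau>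
    = rot.flat_torus (cos (pi / 4 + \<tau>) / sqrt 3) (sin (pi / 4 + \<tau>) / sqrt 3) (sqrt (2 / 3)) (sqrt 3)"
  unfolding ejiri_variation_def ytheta_eq_flat_torus std.flat_torus_def rot.flat_torus_def
    great_circle_def
  by (intro ext)
    (simp add: linear_add[OF linear_ejiri_rotation] linear_scale[OF linear_ejiri_rotation])

lemma willmore_ejiri_variation:
  "willmore (ejiri_variation \<tau>) (2 * pi / sqrt 3) (2 * pi)
    = willmore_profile (torus_rho (pi / 4 + \<tau>))"
  unfolding ejiri_variation_eq_flat_torus by (simp add: rot.willmore_family)

lemma torus_immersion_ejiri_variation:
  "torus_immersion_S5 (ejiri_variation \<tau>) (2 * pi / sqrt 3) (2 * pi)"
  unfolding ejiri_variation_eq_flat_torus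
  by (rule rot.torus_immersion_flat_torus)
    (simp_all only: family_coeff_squares, simp_all add: field_simps)

lemma smooth_map_ejiri_variation:
  "smooth_map (\<lambda>q::real \<times> real \<times> real. ejiri_variation (fst q) (fst (snd q)) (snd (snd q)))"
proof -
  have "ejiri_variation \<tau>
      = rot.flat_torus ((1 / sqrt 3) * cos (\<tau> + pi / 4)) ((1 / sqrt 3) * sin (\<tau> + pi / 4))
      (sqrt (2 / 3)) (sqrt 3)" for \<tau>
    unfolding ejiri_variation_eq_flat_torus by (simp add: add.commute)
  then show ?thesis
    using rot.smooth_map_flat_torus_rotating_coeffs by presburger
qed

lemma willmore_ejiri_variation_has_real_derivative:
  "((\<lambda>r. willmore (ejiri_variation r) (2 * pi / sqrt 3) (2 * pi)) has_real_derivative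
     willmore_profile_deriv (torus_rho (pi / 4 + \<tau>))
     * (2 * sin (2 * (pi / 4 + \<tau>)) / torus_rho (pi / 4 + \<tau>))
     * cos (2 * (pi / 4 + \<tau>))) (at \<tau>)"
proof -
  have "((\<lambda>r. torus_rho (pi / 4 + r)) has_real_derivative 2 * sin (2 * (pi / 4 + \<tau>))
      * cos (2 * (pi / 4 + \<tau>)) / torus_rho (pi / 4 + \<tau>)) (at \<tau>)"
    by (auto intro!: derivative_eq_intros)
  from DERIV_chain2[OF willmore_profile_has_real_derivative[OF torus_rho_pos] this]
  show ?thesis
    unfolding willmore_ejiri_variation by (rule DERIV_cong) simp
qed

lemma willmore_unstable_ejiri: "willmore_unstable ejiri (2 * pi / sqrt 3) (2 * pi)"
proof -
  define g where "g \<tau> = willmore_profile_deriv (torus_rho (pi / 4 + \<tau>))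
    * (2 * sin (2 * (pi / 4 + \<tau>)) / torus_rho (pi / 4 + \<tau>))" for \<tau>
  have first_variation: "((\<lambda>r. willmore (ejiri_variation r) (2 * pi / sqrt 3) (2 * pi))
      has_real_derivative g \<tau> * cos (2 * (pi / 4 + \<tau>))) (at \<tau>)" for \<tau>
    using willmore_ejiri_variation_has_real_derivative by (simp add: g_def)
  have "\<exists>g'. (g has_real_derivative g') (at 0)"
  proof -
    have "torus_rho \<theta> \<noteq> 0" for \<theta>
      using torus_rho_pos[of \<theta>] by simp
    then show ?thesis
      unfolding g_def willmore_profile_deriv_def
      by (intro exI) (rule derivative_intros | simp)+
  qed
  then obtain g' where "(g has_real_derivative g') (at 0)" ..
  \<comment> \<open>the first variation vanishes at \<open>\<tau> = 0\<close> through its factor \<open>cos (pi/2 + 2\<tau>)\<close>\<close>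
  have second_variation: "((\<lambda>\<tau>. g \<tau> * cos (2 * (pi / 4 + \<tau>))) has_real_derivative - 2 * g 0) (at 0)"
  proof -
    have "((\<lambda>\<tau>. cos (2 * (pi / 4 + \<tau>))) has_real_derivative - 2) (at 0)"
      by (auto intro!: derivative_eq_intros)
    from DERIV_mult[OF \<open>(g has_real_derivative g') (at 0)\<close> this] show ?thesis
      by simp
  qed
  have "g 0 > 0"
    using willmore_profile_deriv_pos[of "sqrt 3"] by (simp add: g_def torus_rho_pi4)
  show ?thesis
    unfolding willmore_unstable_def
  proof (intro exI conjI)
    show "ejiri_variation 0 = ejiri"
      by (intro ext) (simp add: ejiri_variation_def ejiri_eq_rotated_ytheta)
    show "(1::real) > 0" by simp
    show "- 2 * g 0 < 0" using \<open>g 0 > 0\<close> by simp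
  qed (use smooth_map_ejiri_variation torus_immersion_ejiri_variation first_variation
      second_variation in auto)
qed

theorem proposition5p1:
  shows "(\<forall>\<theta>\<in>{0..pi/2}.
            sqrt (2 + (sin (2*\<theta>))\<^sup>2) \<in> {sqrt 2..sqrt 3} \<and>
            willmore (ytheta \<theta>) (2*pi) (2*pi)
              = 6 * pi\<^sup>2 * (2 / sqrt (2 + (sin (2*\<theta>))\<^sup>2) - 3 / (sqrt (2 + (sin (2*\<theta>))\<^sup>2))^3))
       \<and> strict_mono_on {sqrt 2..sqrt 3} (\<lambda>\<rho>. 6 * pi\<^sup>2 * (2 / \<rho> - 3 / \<rho>^3))
       \<and> (\<exists>Q. orthogonal_transformation Q \<and>
              (\<forall>s t. ejiri s t = Q (ytheta (pi/4) (sqrt 3 * s) t)))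
       \<and> willmore (ytheta (pi/4)) (2*pi) (2*pi) = 2 * pi\<^sup>2 * sqrt 3
       \<and> (\<forall>\<theta>\<in>{0..pi/2}. willmore (ytheta \<theta>) (2*pi) (2*pi) \<le> willmore (ytheta (pi/4)) (2*pi) (2*pi))
       \<and> willmore_unstable ejiri (2*pi / sqrt 3) (2*pi)"
  using torus_rho_bounds willmore_ytheta strict_mono_on_willmore_profile
    orthogonal_transformation_ejiri_rotation ejiri_eq_rotated_ytheta willmore_ytheta_pi4
    willmore_ytheta_le_pi4 willmore_unstable_ejiri
  unfolding torus_rho_def willmore_profile_def[abs_def]
  by blast

end
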